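(* Let $G=(V,E)$ be a directed graph, $T=\{t_1,\dots,t_{n_T}\}$ a finite task set, $W^j=\{w^j_{uv}\in[0,1]:(u,v)\in E\}$ for each $t_j$, $\mathcal{L}:V\to\{a_1,\dots,a_{n_A}\}$ a location map, and $q_j^k\ge0$ qualities with $Q_j:=\sum_{v\in V}q_j^{\mathcal{L}(v)}>0$ for every $j$. Let $V_R\subseteq V$ with task sets $T_i\subseteq T$ for $v_i\in V_R$, and let $S\subseteq V_R$. Let $R(X)$ be a random MT-RR set as defined in the context. Then $$f(S)=\sum_{t_j\in T}Q_j\cdot\mathbb{E}_{R(X)}\big[\mathbb{I}_j(S^j\cap R(X))\big],$$ where $\mathbb{I}_j(S^j\cap R(X))=1$ if $X=j$ and $S^j\cap R(X)\neq\emptyset$, and $0$ otherwise.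
   Context: A realization $g$ of $W^j$ is a random spanning subgraph of $G$ in which each edge $(u,v)$ is included independently with probability $w^j_{uv}$, with probability $\Pr[g;W^j]$. $I_g(A)$ denotes the set of nodes reachable from a node of $A$ by a directed path in $g$ (including $A$). $S^j=\{v_i\in S:t_j\in T_i\}$, and $f(S)=\frac{1}{n_T}\sum_{t_j\in T}\sum_g\Pr[g;W^j]\sum_{v\in I_g(S^j)}q_j^{\mathcal{L}(v)}$. A random RR set $R^j$ for task $t_j$ is generated by: choosing a node $u\in V$ with probability $q_j^{\mathcal{L}(u)}/Q_j$; independently sampling a realization $g$ of $W^j$; and letting $R^j$ be the set of nodes that can reach $u$ by a directed path in $g$ (including $u$). A random MT-RR set $R(X)$ is generated by choosing $X$ uniformly at random from $\{1,\dots,n_T\}$ and then generating a random RR set for task $t_X$. *)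

theory Defs
  imports "HOL-Probability.Probability"
begin

text \<open>Tasks are indexed by j in {1..nT}. Edge probabilities of task j: w j u v.
  Location map L, qualities q j k.\<close>

definition Qsum :: "'v set \<Rightarrow> ('v \<Rightarrow> 'a) \<Rightarrow> (nat \<Rightarrow> 'a \<Rightarrow> real) \<Rightarrow> nat \<Rightarrow> real" where
  "Qsum V L q j = (\<Sum>v\<in>V. q j (L v))"

definition realization_prob ::
  "('v \<times> 'v) set \<Rightarrow> (nat \<Rightarrow> 'v \<Rightarrow> 'v \<Rightarrow> real) \<Rightarrow> nat \<Rightarrow> ('v \<times> 'v) set \<Rightarrow> real" where
  "realization_prob E w j g =
     (if g \<subseteq> E then (\<Prod>(u,v)\<in>g. w j u v) * (\<Prod>(u,v)\<in>E - g. 1 - w j u v) else 0)"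

definition reach_from :: "('v \<times> 'v) set \<Rightarrow> 'v set \<Rightarrow> 'v set" where
  "reach_from g A = {v. \<exists>a\<in>A. (a, v) \<in> g\<^sup>*}"

definition task_seeds :: "'v set \<Rightarrow> ('v \<Rightarrow> nat set) \<Rightarrow> nat \<Rightarrow> 'v set" where
  "task_seeds S Ts j = {v\<in>S. j \<in> Ts v}"

definition f_obj ::
  "'v set \<Rightarrow> ('v \<times> 'v) set \<Rightarrow> nat \<Rightarrow> (nat \<Rightarrow> 'v \<Rightarrow> 'v \<Rightarrow> real) \<Rightarrow> ('v \<Rightarrow> 'a)
   \<Rightarrow> (nat \<Rightarrow> 'a \<Rightarrow> real) \<Rightarrow> ('v \<Rightarrow> nat set) \<Rightarrow> 'v set \<Rightarrow> real" where
  "f_obj V E nT w L q Ts S =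
     (1 / real nT) * (\<Sum>j\<in>{1..nT}. \<Sum>g\<in>Pow E.
        realization_prob E w j g * (\<Sum>v\<in>reach_from g (task_seeds S Ts j). q j (L v)))"

definition realization_pmf ::
  "('v \<times> 'v) set \<Rightarrow> (nat \<Rightarrow> 'v \<Rightarrow> 'v \<Rightarrow> real) \<Rightarrow> nat \<Rightarrow> ('v \<times> 'v) set pmf" where
  "realization_pmf E w j = embed_pmf (realization_prob E w j)"

definition root_pmf :: "'v set \<Rightarrow> ('v \<Rightarrow> 'a) \<Rightarrow> (nat \<Rightarrow> 'a \<Rightarrow> real) \<Rightarrow> nat \<Rightarrow> 'v pmf" where
  "root_pmf V L q j = embed_pmf (\<lambda>u. if u \<in> V then q j (L u) / Qsum V L q j else 0)"

definition rr_pmf ::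
  "'v set \<Rightarrow> ('v \<times> 'v) set \<Rightarrow> (nat \<Rightarrow> 'v \<Rightarrow> 'v \<Rightarrow> real) \<Rightarrow> ('v \<Rightarrow> 'a)
   \<Rightarrow> (nat \<Rightarrow> 'a \<Rightarrow> real) \<Rightarrow> nat \<Rightarrow> 'v set pmf" where
  "rr_pmf V E w L q j =
     bind_pmf (root_pmf V L q j) (\<lambda>u.
     bind_pmf (realization_pmf E w j) (\<lambda>g.
     return_pmf {x. (x, u) \<in> g\<^sup>*}))"

definition mtrr_pmf ::
  "'v set \<Rightarrow> ('v \<times> 'v) set \<Rightarrow> nat \<Rightarrow> (nat \<Rightarrow> 'v \<Rightarrow> 'v \<Rightarrow> real) \<Rightarrow> ('v \<Rightarrow> 'a)
   \<Rightarrow> (nat \<Rightarrow> 'a \<Rightarrow> real) \<Rightarrow> (nat \<times> 'v set) pmf" where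
  "mtrr_pmf V E nT w L q =
     bind_pmf (pmf_of_set {1..nT}) (\<lambda>X.
     map_pmf (\<lambda>R. (X, R)) (rr_pmf V E w L q X))"

definition ind_j :: "nat \<Rightarrow> 'v set \<Rightarrow> nat \<times> 'v set \<Rightarrow> real" where
  "ind_j j Sj XR = (if fst XR = j \<and> Sj \<inter> snd XR \<noteq> {} then 1 else 0)"

end

theory Submission
  imports Defs
begin

text \<open>Averaging over the uniformly chosen task X leaves 1/nT times the probability that the
  RR set of task j meets S^j. The RR set rooted at u meets S^j in the realization g exactly
  when u lies in I_g(S^j). Since the root u is drawn with probability q_j^(L u)/Q_j,
  exchanging the sums over u and over g shows that Q_j times this probability is the
  expected quality of I_g(S^j), the j-th summand of f(S).\<close>

lemma pmf_embed_pmf_finite_support: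
  fixes f :: "'a \<Rightarrow> real"
  assumes "finite A" "\<And>x. 0 \<le> f x" "\<And>x. x \<notin> A \<Longrightarrow> f x = 0" "(\<Sum>x\<in>A. f x) = 1"
  shows "pmf (embed_pmf f) x = f x"
proof (rule pmf_embed_pmf)
  show "0 \<le> f x" for x by (fact assms(2))
  have "(\<integral>\<^sup>+x. ennreal (f x) \<partial>count_space UNIV) = (\<Sum>x\<in>A. ennreal (f x))"
    using assms(1,3) by (intro nn_integral_count_space') auto
  also have "\<dots> = 1"
    using assms(2,4) by (subst sum_ennreal) auto
  finally show "(\<integral>\<^sup>+x. ennreal (f x) \<partial>count_space UNIV) = 1" .
qed

lemma realization_prob_nonneg:
  assumes "\<forall>(u,v)\<in>E. 0 \<le> w j u v \<and> w j u v \<le> 1"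
  shows "0 \<le> realization_prob E w j g"
  unfolding realization_prob_def using assms
  by (auto intro!: mult_nonneg_nonneg prod_nonneg split: prod.splits)

lemma sum_realization_prob:
  assumes "finite E"
  shows "(\<Sum>g\<in>Pow E. realization_prob E w j g) = 1"
proof -
  have "(\<Sum>g\<in>Pow E. realization_prob E w j g)
      = (\<Sum>g\<in>Pow E. (\<Prod>e\<in>g. case_prod (w j) e) * (\<Prod>e\<in>E - g. 1 - case_prod (w j) e))"
    unfolding realization_prob_def by (intro sum.cong) (auto simp: case_prod_unfold)
  also have "\<dots> = (\<Prod>e\<in>E. case_prod (w j) e + (1 - case_prod (w j) e))"
    by (rule prod_add[OF assms, symmetric])
  also have "\<dots> = 1" by simp
  finally show ?thesis .
qed

lemma reach_from_subset:
  assumes "g \<subseteq> V \<times> V" "A \<subseteq> V"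
  shows "reach_from g A \<subseteq> V"
  using assms by (auto simp: reach_from_def elim: rtranclE)

locale rr_sampling =
  fixes V :: "'v set" and E :: "('v \<times> 'v) set" and w :: "nat \<Rightarrow> 'v \<Rightarrow> 'v \<Rightarrow> real"
    and L :: "'v \<Rightarrow> 'a" and q :: "nat \<Rightarrow> 'a \<Rightarrow> real" and j :: nat
  assumes finite_V: "finite V" and E_subset: "E \<subseteq> V \<times> V"
    and w_bounds: "\<forall>(u,v)\<in>E. 0 \<le> w j u v \<and> w j u v \<le> 1"
    and q_nonneg: "\<forall>k. 0 \<le> q j k" and Qsum_pos: "Qsum V L q j > 0"
begin

lemma finite_E: "finite E"
  using finite_V E_subset by (simp add: finite_subset)

lemma pmf_realization_pmf: "pmf (realization_pmf E w j) g = realization_prob E w j g"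
  unfolding realization_pmf_def
proof (rule pmf_embed_pmf_finite_support[of "Pow E"])
  show "0 \<le> realization_prob E w j g" for g
    using w_bounds by (rule realization_prob_nonneg)
  show "realization_prob E w j g = 0" if "g \<notin> Pow E" for g
    using that by (simp add: realization_prob_def)
qed (use finite_E sum_realization_prob in auto)

lemma set_pmf_realization_pmf: "set_pmf (realization_pmf E w j) \<subseteq> Pow E"
  using pmf_realization_pmf by (auto simp: set_pmf_eq realization_prob_def split: if_splits)

lemma finite_set_pmf_realization_pmf: "finite (set_pmf (realization_pmf E w j))"
  using set_pmf_realization_pmf finite_E by (meson finite_Pow_iff finite_subset)

lemma pmf_root_pmf:
  "pmf (root_pmf V L q j) u = (if u \<in> V then q j (L u) / Qsum V L q j else 0)"
  unfolding root_pmf_def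
  using finite_V q_nonneg Qsum_pos by (intro pmf_embed_pmf_finite_support[of V])
    (auto simp: Qsum_def sum_divide_distrib[symmetric])

lemma set_pmf_root_pmf: "set_pmf (root_pmf V L q j) \<subseteq> V"
  using pmf_root_pmf by (auto simp: set_pmf_eq split: if_splits)

lemma finite_set_pmf_rr_pmf: "finite (set_pmf (rr_pmf V E w L q j))"
proof -
  have "finite (set_pmf (root_pmf V L q j))"
    using set_pmf_root_pmf finite_V by (rule finite_subset)
  then show ?thesis
    using finite_set_pmf_realization_pmf unfolding rr_pmf_def by (simp add: set_bind_pmf)
qed

lemma expectation_rr_pmf:
  fixes h :: "'v set \<Rightarrow> real"
  shows "measure_pmf.expectation (rr_pmf V E w L q j) h =
    (\<Sum>u\<in>V. q j (L u) / Qsum V L q j *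
       (\<Sum>g\<in>Pow E. realization_prob E w j g * h {x. (x, u) \<in> g\<^sup>*}))"
proof -
  let ?R = "\<lambda>u. map_pmf (\<lambda>g. {x. (x, u) \<in> g\<^sup>*}) (realization_pmf E w j)"
  have rr: "rr_pmf V E w L q j = root_pmf V L q j \<bind> ?R"
    by (simp add: rr_pmf_def map_pmf_def)
  have "finite (set_pmf (?R u))" for u
    using finite_set_pmf_realization_pmf by simp
  moreover have "measure_pmf.expectation (?R u) h
      = (\<Sum>g\<in>Pow E. realization_prob E w j g * h {x. (x, u) \<in> g\<^sup>*})" for u
    using finite_E set_pmf_realization_pmf pmf_realization_pmf
    by (subst integral_map_pmf, subst integral_measure_pmf[of "Pow E"]) auto
  ultimately show ?thesis
    unfolding rr using finite_V set_pmf_root_pmf pmf_root_pmf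
    by (subst pmf_expectation_bind[of V]) auto
qed

lemma expectation_rr_pmf_hit:
  assumes "A \<subseteq> V"
  shows "Qsum V L q j *
      measure_pmf.expectation (rr_pmf V E w L q j) (\<lambda>R. if A \<inter> R \<noteq> {} then 1 else 0)
    = (\<Sum>g\<in>Pow E. realization_prob E w j g * (\<Sum>v\<in>reach_from g A. q j (L v)))"
proof -
  have hit_iff: "A \<inter> {x. (x, u) \<in> g\<^sup>*} \<noteq> {} \<longleftrightarrow> u \<in> reach_from g A" for g u
    by (auto simp: reach_from_def)
  have "Qsum V L q j *
      measure_pmf.expectation (rr_pmf V E w L q j) (\<lambda>R. if A \<inter> R \<noteq> {} then 1 else 0)
      = (\<Sum>u\<in>V. \<Sum>g\<in>Pow E.
          realization_prob E w j g * (if u \<in> reach_from g A then q j (L u) else 0))"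
    using Qsum_pos
    by (simp add: expectation_rr_pmf hit_iff sum_distrib_left if_distrib mult_ac cong: if_cong)
  also have "\<dots> = (\<Sum>g\<in>Pow E. realization_prob E w j g * (\<Sum>u\<in>V \<inter> reach_from g A. q j (L u)))"
    using finite_V by (subst sum.swap) (simp add: sum_distrib_left sum.inter_restrict)
  also have "\<dots> = (\<Sum>g\<in>Pow E. realization_prob E w j g * (\<Sum>v\<in>reach_from g A. q j (L v)))"
    using reach_from_subset[OF _ assms] E_subset by (intro sum.cong refl) (simp add: Int_absorb1)
  finally show ?thesis .
qed

end

lemma expectation_mtrr_pmf_ind_j:
  assumes "j \<in> {1..nT}" and "\<And>X. X \<in> {1..nT} \<Longrightarrow> finite (set_pmf (rr_pmf V E w L q X))"
  shows "measure_pmf.expectation (mtrr_pmf V E nT w L q) (ind_j j A) =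
    measure_pmf.expectation (rr_pmf V E w L q j) (\<lambda>R. if A \<inter> R \<noteq> {} then 1 else 0) / real nT"
proof -
  have "measure_pmf.expectation (mtrr_pmf V E nT w L q) (ind_j j A)
      = (\<Sum>X\<in>{1..nT}. measure_pmf.expectation (rr_pmf V E w L q X) (\<lambda>R. ind_j j A (X, R)) / real nT)"
    unfolding mtrr_pmf_def using assms
    by (subst pmf_expectation_bind_pmf_of_set) (auto simp: divide_inverse_commute)
  also have "\<dots> = (\<Sum>X\<in>{1..nT}. if X = j
      then measure_pmf.expectation (rr_pmf V E w L q j) (\<lambda>R. if A \<inter> R \<noteq> {} then 1 else 0) / real nT
      else 0)"
    by (intro sum.cong) (auto simp: ind_j_def)
  also have "\<dots> = measure_pmf.expectation (rr_pmf V E w L q j) (\<lambda>R. if A \<inter> R \<noteq> {} then 1 else 0) / real nT"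
    using assms(1) by simp
  finally show ?thesis .
qed

theorem theorem3:
  fixes V :: "'v set" and E :: "('v \<times> 'v) set" and nT :: nat
    and w :: "nat \<Rightarrow> 'v \<Rightarrow> 'v \<Rightarrow> real" and L :: "'v \<Rightarrow> 'a"
    and q :: "nat \<Rightarrow> 'a \<Rightarrow> real" and VR :: "'v set" and Ts :: "'v \<Rightarrow> nat set"
    and S :: "'v set"
  assumes "finite V" and "E \<subseteq> V \<times> V"
    and "\<forall>j\<in>{1..nT}. \<forall>(u,v)\<in>E. 0 \<le> w j u v \<and> w j u v \<le> 1"
    and "\<forall>j k. 0 \<le> q j k"
    and "\<forall>j\<in>{1..nT}. Qsum V L q j > 0"
    and "VR \<subseteq> V" and "\<forall>v\<in>VR. Ts v \<subseteq> {1..nT}"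
    and "S \<subseteq> VR"
  shows "f_obj V E nT w L q Ts S =
    (\<Sum>j\<in>{1..nT}. Qsum V L q j *
       measure_pmf.expectation (mtrr_pmf V E nT w L q) (ind_j j (task_seeds S Ts j)))"
proof -
  have sampling: "rr_sampling V E w L q j" if "j \<in> {1..nT}" for j
    using assms that by unfold_locales auto
  have "Qsum V L q j * measure_pmf.expectation (mtrr_pmf V E nT w L q) (ind_j j (task_seeds S Ts j))
      = 1 / real nT * (\<Sum>g\<in>Pow E. realization_prob E w j g *
          (\<Sum>v\<in>reach_from g (task_seeds S Ts j). q j (L v)))"
    if j: "j \<in> {1..nT}" for j
  proof -
    have "task_seeds S Ts j \<subseteq> V"
      using assms(6,8) by (auto simp: task_seeds_def)
    then show ?thesis
      using expectation_mtrr_pmf_ind_j[OF j rr_sampling.finite_set_pmf_rr_pmf[OF sampling]]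
        rr_sampling.expectation_rr_pmf_hit[OF sampling[OF j]]
      by simp
  qed
  then show ?thesis
    unfolding f_obj_def by (simp add: sum_distrib_left)
qed

end
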